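(* Let $t$ be a positive integer and let $G$ be a minimal counterexample to the following conjecture: every graph on $4t-1$ vertices with independence number $2$ satisfies $\mathrm{cm}(G)\ge t$. That is, $G$ has $4t-1$ vertices, $\alpha(G)=2$ and $\mathrm{cm}(G)\le t-1$, and the conjecture holds for every positive integer $t'<t$. Then $G$ contains no dominating matching.
   Context: All graphs are finite and simple. $\alpha(G)$ is the independence number. A matching $M$ in $G$ is connected if for every two edges of $M$ there is an edge of $G$ joining an endpoint of one to an endpoint of the other; $\mathrm{cm}(G)$ is the maximum size of a connected matching in $G$. A connected matching $M$ of $G$ is dominating if every edge of $M$ is adjacent to every vertex of $V(G)\setminus V(M)$, i.e. every vertex outside $V(M)$ is adjacent to at least one endpoint of each edge of $M$. *)

theory Defs
  imports Main
begin

definition graph :: "'a set \<Rightarrow> ('a \<Rightarrow> 'a \<Rightarrow> bool) \<Rightarrow> bool" where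
  "graph V E \<longleftrightarrow> finite V \<and> (\<forall>x y. E x y \<longrightarrow> x \<in> V \<and> y \<in> V)
     \<and> (\<forall>x y. E x y \<longrightarrow> E y x) \<and> (\<forall>x. \<not> E x x)"

definition independent_set :: "'a set \<Rightarrow> ('a \<Rightarrow> 'a \<Rightarrow> bool) \<Rightarrow> 'a set \<Rightarrow> bool" where
  "independent_set V E S \<longleftrightarrow> S \<subseteq> V \<and> (\<forall>x\<in>S. \<forall>y\<in>S. \<not> E x y)"

definition alpha :: "'a set \<Rightarrow> ('a \<Rightarrow> 'a \<Rightarrow> bool) \<Rightarrow> nat" where
  "alpha V E = Max {card S | S. independent_set V E S}"

definition matching :: "'a set \<Rightarrow> ('a \<Rightarrow> 'a \<Rightarrow> bool) \<Rightarrow> 'a set set \<Rightarrow> bool" where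
  "matching V E M \<longleftrightarrow> (\<forall>e\<in>M. \<exists>u v. e = {u, v} \<and> E u v)
     \<and> (\<forall>e\<in>M. \<forall>f\<in>M. e \<noteq> f \<longrightarrow> e \<inter> f = {})"

definition connected_matching :: "'a set \<Rightarrow> ('a \<Rightarrow> 'a \<Rightarrow> bool) \<Rightarrow> 'a set set \<Rightarrow> bool" where
  "connected_matching V E M \<longleftrightarrow> matching V E M
     \<and> (\<forall>e\<in>M. \<forall>f\<in>M. e \<noteq> f \<longrightarrow> (\<exists>u\<in>e. \<exists>v\<in>f. E u v))"

definition cm :: "'a set \<Rightarrow> ('a \<Rightarrow> 'a \<Rightarrow> bool) \<Rightarrow> nat" where
  "cm V E = Max {card M | M. connected_matching V E M}"

definition dominating_matching :: "'a set \<Rightarrow> ('a \<Rightarrow> 'a \<Rightarrow> bool) \<Rightarrow> 'a set set \<Rightarrow> bool" where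
  "dominating_matching V E M \<longleftrightarrow> connected_matching V E M
     \<and> (\<forall>e\<in>M. \<forall>x\<in>V - \<Union>M. \<exists>u\<in>e. E x u)"

end

theory Submission
  imports Defs
begin

text \<open>Let \<open>M\<close> be a nonempty dominating matching with \<open>m\<close> edges, so \<open>0 < m < t\<close>. The set \<open>W\<close> of
  vertices outside \<open>M\<close> has at least \<open>4t - 1 - 2m \<ge> 4(t - m) - 1\<close> elements. If \<open>W\<close> is a clique,
  it carries a connected matching with \<open>t - m\<close> edges; otherwise a subset of \<open>W\<close> of size
  \<open>4(t - m) - 1\<close> containing a non-edge induces a graph with independence number 2, which has such
  a connected matching by minimality of \<open>t\<close>. Since \<open>M\<close> dominates \<open>W\<close>, the union of the two
  matchings is a connected matching with \<open>t\<close> edges, contradicting \<open>cm(G) < t\<close>.\<close>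

lemma connected_matchingI:
  assumes "\<And>e. e \<in> M \<Longrightarrow> \<exists>u v. e = {u, v} \<and> E u v"
    and "\<And>e f. e \<in> M \<Longrightarrow> f \<in> M \<Longrightarrow> e \<noteq> f \<Longrightarrow> e \<inter> f = {}"
    and "\<And>e f. e \<in> M \<Longrightarrow> f \<in> M \<Longrightarrow> e \<noteq> f \<Longrightarrow> \<exists>u\<in>e. \<exists>v\<in>f. E u v"
  shows "connected_matching V E M"
  using assms unfolding connected_matching_def matching_def by simp

lemma connected_matching_edge:
  assumes "connected_matching V E M" "e \<in> M"
  shows "\<exists>u v. e = {u, v} \<and> E u v"
  using assms unfolding connected_matching_def matching_def by simp

lemma connected_matching_disjoint:
  assumes "connected_matching V E M" "e \<in> M" "f \<in> M" "e \<noteq> f"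
  shows "e \<inter> f = {}"
  using assms unfolding connected_matching_def matching_def by simp

lemma connected_matching_joined:
  assumes "connected_matching V E M" "e \<in> M" "f \<in> M" "e \<noteq> f"
  shows "\<exists>u\<in>e. \<exists>v\<in>f. E u v"
  using assms unfolding connected_matching_def by simp

lemma connected_matching_empty: "connected_matching V E {}"
  by (rule connected_matchingI) simp_all

lemma connected_matching_singleton:
  assumes "E a b"
  shows "connected_matching V E {{a, b}}"
  by (rule connected_matchingI) (use assms in auto)

lemma connected_matching_mono:
  assumes E': "\<And>x y. E x y \<Longrightarrow> E' x y" and M: "connected_matching V E M"
  shows "connected_matching V' E' M"
proof (rule connected_matchingI)
  fix e assume "e \<in> M"
  then obtain u v where "e = {u, v}" "E u v" using connected_matching_edge[OF M] by blast
  then show "\<exists>u v. e = {u, v} \<and> E' u v" using E' by blast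
next
  fix e f assume "e \<in> M" "f \<in> M" "e \<noteq> f"
  then show "e \<inter> f = {}" by (rule connected_matching_disjoint[OF M])
next
  fix e f assume "e \<in> M" "f \<in> M" "e \<noteq> f"
  then obtain u v where "u \<in> e" "v \<in> f" "E u v" using connected_matching_joined[OF M] by blast
  then show "\<exists>u\<in>e. \<exists>v\<in>f. E' u v" using E' by blast
qed

lemma connected_matching_Union_subset:
  assumes "graph V E" "connected_matching V E M"
  shows "\<Union>M \<subseteq> V"
  using assms(1) connected_matching_edge[OF assms(2)] unfolding graph_def by blast

lemma finite_connected_matching:
  assumes "graph V E" "connected_matching V E M"
  shows "finite M"
proof (rule finite_subset)
  show "M \<subseteq> Pow V" using connected_matching_Union_subset[OF assms] by blast
  show "finite (Pow V)" using assms(1) by (simp add: graph_def)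
qed

lemma card_Union_connected_matching_le:
  assumes "connected_matching V E M" "finite M"
  shows "card (\<Union>M) \<le> 2 * card M"
proof -
  have "card (\<Union>M) \<le> (\<Sum>e\<in>M. card e)" by (rule card_Union_le_sum_card)
  also have "\<dots> \<le> (\<Sum>e\<in>M. 2)"
  proof (rule sum_mono)
    fix e assume "e \<in> M"
    then obtain u v where "e = {u, v}" using connected_matching_edge[OF assms(1)] by blast
    then show "card e \<le> 2" by (simp add: card_insert_if)
  qed
  finally show ?thesis by simp
qed

lemma card_Un_connected_matching:
  assumes "graph V E" "connected_matching V E M" "connected_matching V E N" "\<Union>M \<inter> \<Union>N = {}"
  shows "card (M \<union> N) = card M + card N"
proof (rule card_Un_disjoint)
  show "finite M" "finite N" using finite_connected_matching assms by blast+
  show "M \<inter> N = {}"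
  proof (rule ccontr)
    assume "M \<inter> N \<noteq> {}"
    then obtain e where "e \<in> M" "e \<subseteq> \<Union>M \<inter> \<Union>N" by blast
    moreover from \<open>e \<in> M\<close> have "e \<noteq> {}" using connected_matching_edge[OF assms(2)] by blast
    ultimately show False using assms(4) by blast
  qed
qed

lemma connected_matching_Un:
  assumes sym: "\<And>x y. E x y \<Longrightarrow> E y x"
    and M: "connected_matching V E M" and N: "connected_matching V E N"
    and disj: "\<Union>M \<inter> \<Union>N = {}"
    and joined: "\<And>e f. e \<in> M \<Longrightarrow> f \<in> N \<Longrightarrow> \<exists>u\<in>e. \<exists>v\<in>f. E u v"
  shows "connected_matching V E (M \<union> N)"
proof (rule connected_matchingI)
  fix e assume "e \<in> M \<union> N"
  then show "\<exists>u v. e = {u, v} \<and> E u v"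
    using connected_matching_edge[OF M] connected_matching_edge[OF N] by blast
next
  fix e f assume "e \<in> M \<union> N" "f \<in> M \<union> N" "e \<noteq> f"
  then show "e \<inter> f = {}"
    using connected_matching_disjoint[OF M] connected_matching_disjoint[OF N] disj by blast
next
  fix e f assume "e \<in> M \<union> N" "f \<in> M \<union> N" "e \<noteq> f"
  moreover have "\<exists>u\<in>f. \<exists>v\<in>e. E u v" if "e \<in> M" "f \<in> N" for e f
    using joined[OF that] sym by blast
  ultimately show "\<exists>u\<in>e. \<exists>v\<in>f. E u v"
    using connected_matching_joined[OF M] connected_matching_joined[OF N] joined by blast
qed

lemma finite_card_connected_matchings:
  assumes "graph V E"
  shows "finite {card M | M. connected_matching V E M}"
proof (rule finite_subset)
  show "{card M | M. connected_matching V E M} \<subseteq> {..card (Pow V)}"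
  proof clarify
    fix M assume "connected_matching V E M"
    then have "M \<subseteq> Pow V" using connected_matching_Union_subset[OF assms] by blast
    then show "card M \<le> card (Pow V)" using assms by (simp add: card_mono graph_def)
  qed
qed simp

lemma card_le_cm:
  assumes "graph V E" "connected_matching V E M"
  shows "card M \<le> cm V E"
  unfolding cm_def using finite_card_connected_matchings[OF assms(1)] assms(2)
  by (intro Max_ge) auto

lemma cm_attained:
  assumes "graph V E"
  obtains M where "connected_matching V E M" "card M = cm V E"
proof -
  have "{card M | M. connected_matching V E M} \<noteq> {}"
    using connected_matching_empty by fast
  then have "cm V E \<in> {card M | M. connected_matching V E M}"
    unfolding cm_def by (rule Max_in[OF finite_card_connected_matchings[OF assms]])
  then show ?thesis using that by auto
qed

lemma clique_connected_matching:
  assumes sym: "\<And>x y. E x y \<Longrightarrow> E y x"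
    and "finite S" "2 * k \<le> card S"
    and "\<And>x y. x \<in> S \<Longrightarrow> y \<in> S \<Longrightarrow> x \<noteq> y \<Longrightarrow> E x y"
  shows "\<exists>M. connected_matching V E M \<and> \<Union>M \<subseteq> S \<and> card M = k"
  using assms(2-4)
proof (induction k arbitrary: S)
  case 0
  show ?case using connected_matching_empty by fastforce
next
  case (Suc k)
  have "2 \<le> card S" using Suc.prems(2) by simp
  then obtain T where "T \<subseteq> S" "card T = 2" by (rule obtain_subset_with_card_n)
  then obtain a b where ab: "a \<in> S" "b \<in> S" "a \<noteq> b" by (auto simp: card_2_iff)
  have "2 * k \<le> card (S - {a, b})" using Suc.prems(2) ab by (simp add: card_Diff_subset)
  then have "\<exists>M. connected_matching V E M \<and> \<Union>M \<subseteq> S - {a, b} \<and> card M = k"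
    by (intro Suc.IH) (use Suc.prems(1,3) in auto)
  then obtain M where M: "connected_matching V E M" "\<Union>M \<subseteq> S - {a, b}" "card M = k"
    by blast
  have ab_edge: "connected_matching V E {{a, b}}"
    by (rule connected_matching_singleton) (use Suc.prems(3) ab in blast)
  have "\<exists>u\<in>e. \<exists>v\<in>f. E u v" if "e \<in> M" "f \<in> {{a, b}}" for e f
  proof -
    obtain u where "u \<in> e" using connected_matching_edge[OF M(1) \<open>e \<in> M\<close>] by blast
    then have "u \<in> S" "u \<noteq> a" using M(2) \<open>e \<in> M\<close> by blast+
    then have "E u a" using Suc.prems(3) ab(1) by blast
    then show ?thesis using \<open>u \<in> e\<close> that(2) by blast
  qed
  moreover have "\<Union>M \<inter> \<Union>{{a, b}} = {}" using M(2) by blast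
  ultimately have "connected_matching V E (M \<union> {{a, b}})"
    using connected_matching_Un[OF sym M(1) ab_edge] by blast
  moreover have "card (M \<union> {{a, b}}) = Suc k"
  proof -
    have "M \<subseteq> Pow S" using M(2) by blast
    then have "finite M" using Suc.prems(1) by (simp add: finite_subset)
    moreover have "{a, b} \<notin> M" using M(2) by blast
    ultimately show ?thesis using M(3) by simp
  qed
  ultimately show ?case using M(2) ab by blast
qed

definition induced_edges :: "'a set \<Rightarrow> ('a \<Rightarrow> 'a \<Rightarrow> bool) \<Rightarrow> 'a \<Rightarrow> 'a \<Rightarrow> bool" where
  "induced_edges U E x y \<longleftrightarrow> E x y \<and> x \<in> U \<and> y \<in> U"

lemma graph_induced_edges:
  assumes "graph V E" "U \<subseteq> V"
  shows "graph U (induced_edges U E)"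
  using assms unfolding graph_def induced_edges_def by (auto intro: finite_subset)

lemma connected_matching_induced_edges:
  assumes "connected_matching U (induced_edges U E) M"
  shows "connected_matching V E M"
  using assms by (rule connected_matching_mono[rotated]) (simp add: induced_edges_def)

lemma finite_card_independent_sets:
  assumes "finite V"
  shows "finite {card S | S. independent_set V E S}"
proof (rule finite_subset)
  show "{card S | S. independent_set V E S} \<subseteq> {..card V}"
    using assms by (auto simp: independent_set_def card_mono)
qed simp

lemma card_le_alpha:
  assumes "finite V" "independent_set V E S"
  shows "card S \<le> alpha V E"
  unfolding alpha_def using finite_card_independent_sets[OF assms(1)] assms(2)
  by (intro Max_ge) auto

lemma two_le_alpha:
  assumes "graph V E" "x \<in> V" "y \<in> V" "x \<noteq> y" "\<not> E x y"
  shows "2 \<le> alpha V E"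
proof -
  have "independent_set V E {x, y}"
    using assms unfolding graph_def independent_set_def by blast
  then have "card {x, y} \<le> alpha V E"
    using assms(1) by (intro card_le_alpha) (simp_all add: graph_def)
  then show ?thesis using assms(4) by simp
qed

lemma alpha_induced_edges_le:
  assumes "graph V E" "U \<subseteq> V"
  shows "alpha U (induced_edges U E) \<le> alpha V E"
proof -
  have fin: "finite U" "finite V" using assms by (auto simp: graph_def intro: finite_subset)
  have "card S \<le> alpha V E" if "independent_set U (induced_edges U E) S" for S
  proof (rule card_le_alpha[OF fin(2)])
    show "independent_set V E S"
      using that assms(2) unfolding independent_set_def induced_edges_def by blast
  qed
  moreover have "independent_set U (induced_edges U E) {}" by (simp add: independent_set_def)
  ultimately show ?thesis
    unfolding alpha_def using finite_card_independent_sets[OF fin(1)]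
    by (subst Max_le_iff) auto
qed

lemma connected_matching_in_large_subset:
  fixes V :: "'a set"
  assumes G: "graph V E" and "alpha V E \<le> 2" and "W \<subseteq> V" and "0 < s" and "4 * s - 1 \<le> card W"
    and minimal: "\<And>(U :: 'a set) E'. graph U E' \<Longrightarrow> card U = 4 * s - 1 \<Longrightarrow> alpha U E' = 2 \<Longrightarrow> s \<le> cm U E'"
  obtains M where "connected_matching V E M" "\<Union>M \<subseteq> W" "s \<le> card M"
proof (cases "\<exists>x\<in>W. \<exists>y\<in>W. x \<noteq> y \<and> \<not> E x y")
  case True
  then obtain x y where xy: "x \<in> W" "y \<in> W" "x \<noteq> y" "\<not> E x y" by blast
  have finW: "finite W" using G \<open>W \<subseteq> V\<close> by (auto simp: graph_def intro: finite_subset)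
  have "4 * s - 3 \<le> card (W - {x, y})"
    using \<open>4 * s - 1 \<le> card W\<close> xy finW by (simp add: card_Diff_subset)
  then obtain T where T: "T \<subseteq> W - {x, y}" "card T = 4 * s - 3"
    by (rule obtain_subset_with_card_n)
  define U where "U = insert x (insert y T)"
  have "U \<subseteq> W" using T(1) xy unfolding U_def by blast
  have "finite T" using T(1) finW finite_subset by blast
  then have "card U = 4 * s - 1"
    using T xy \<open>0 < s\<close> unfolding U_def by (auto simp: subset_Diff_insert)
  have "U \<subseteq> V" using \<open>U \<subseteq> W\<close> \<open>W \<subseteq> V\<close> by blast
  have GU: "graph U (induced_edges U E)" using graph_induced_edges[OF G \<open>U \<subseteq> V\<close>] .
  have "2 \<le> alpha U (induced_edges U E)"
    using two_le_alpha[OF GU, of x y] xy unfolding U_def induced_edges_def by blast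
  moreover have "alpha U (induced_edges U E) \<le> 2"
    using alpha_induced_edges_le[OF G \<open>U \<subseteq> V\<close>] \<open>alpha V E \<le> 2\<close> by linarith
  ultimately have "s \<le> cm U (induced_edges U E)"
    using minimal[OF GU \<open>card U = 4 * s - 1\<close>] by simp
  moreover obtain M where "connected_matching U (induced_edges U E) M"
    and "card M = cm U (induced_edges U E)"
    using cm_attained[OF GU] .
  moreover from this have "\<Union>M \<subseteq> U"
    using connected_matching_Union_subset[OF GU] by blast
  ultimately show ?thesis
    using that connected_matching_induced_edges \<open>U \<subseteq> W\<close> by (metis order_trans)
next
  case False
  have "finite W" using G \<open>W \<subseteq> V\<close> by (auto simp: graph_def intro: finite_subset)
  moreover have "2 * s \<le> card W" using \<open>4 * s - 1 \<le> card W\<close> \<open>0 < s\<close> by linarith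
  moreover have "\<And>x y. E x y \<Longrightarrow> E y x" using G by (simp add: graph_def)
  ultimately show ?thesis
    using clique_connected_matching[of E W s V] False that by (metis order_refl)
qed

lemma connected_matching_Un_dominating:
  assumes G: "graph V E" and M: "dominating_matching V E M"
    and N: "connected_matching V E N" and "\<Union>N \<subseteq> V - \<Union>M"
  shows "connected_matching V E (M \<union> N)"
proof -
  have sym: "\<And>x y. E x y \<Longrightarrow> E y x" using G by (simp add: graph_def)
  have "\<exists>u\<in>e. \<exists>v\<in>f. E u v" if "e \<in> M" "f \<in> N" for e f
  proof -
    obtain x where "x \<in> f" using connected_matching_edge[OF N \<open>f \<in> N\<close>] by blast
    then have "x \<in> V - \<Union>M" using \<open>f \<in> N\<close> \<open>\<Union>N \<subseteq> V - \<Union>M\<close> by blast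
    then obtain u where "u \<in> e" "E x u"
      using M \<open>e \<in> M\<close> unfolding dominating_matching_def by blast
    then show ?thesis using sym \<open>x \<in> f\<close> by blast
  qed
  moreover have "connected_matching V E M" using M by (simp add: dominating_matching_def)
  moreover have "\<Union>M \<inter> \<Union>N = {}" using \<open>\<Union>N \<subseteq> V - \<Union>M\<close> by blast
  ultimately show ?thesis using connected_matching_Un[OF sym _ N] by blast
qed

lemma card_dominating_matching_add_le_cm:
  fixes V :: "'a set"
  assumes G: "graph V E" and "alpha V E \<le> 2" and dom: "dominating_matching V E M"
    and "0 < s" and "4 * s - 1 + 2 * card M \<le> card V"
    and minimal: "\<And>(U :: 'a set) E'. graph U E' \<Longrightarrow> card U = 4 * s - 1 \<Longrightarrow> alpha U E' = 2 \<Longrightarrow> s \<le> cm U E'"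
  shows "card M + s \<le> cm V E"
proof -
  have M: "connected_matching V E M" using dom by (simp add: dominating_matching_def)
  have "finite M" using finite_connected_matching[OF G M] .
  define W where "W = V - \<Union>M"
  have "W \<subseteq> V" by (simp add: W_def)
  have "card W = card V - card (\<Union>M)"
    unfolding W_def using connected_matching_Union_subset[OF G M] G
    by (simp add: card_Diff_subset finite_subset graph_def)
  then have "4 * s - 1 \<le> card W"
    using card_Union_connected_matching_le[OF M \<open>finite M\<close>] \<open>4 * s - 1 + 2 * card M \<le> card V\<close>
    by linarith
  then obtain N where N: "connected_matching V E N" "\<Union>N \<subseteq> W" "s \<le> card N"
    using connected_matching_in_large_subset[OF G \<open>alpha V E \<le> 2\<close> \<open>W \<subseteq> V\<close> \<open>0 < s\<close> _ minimal]
    by blast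
  have "\<Union>M \<inter> \<Union>N = {}" using N(2) W_def by blast
  then have "card M + card N = card (M \<union> N)"
    using card_Un_connected_matching[OF G M N(1)] by simp
  also have "\<dots> \<le> cm V E"
    using N(2) W_def
    by (simp add: card_le_cm[OF G] connected_matching_Un_dominating[OF G dom N(1)])
  finally show ?thesis using N(3) by linarith
qed

lemma minimal_counterexample_dominating_matching_empty:
  fixes V :: "'a set"
  assumes G: "graph V E" and "alpha V E \<le> 2" and "card V = 4 * t - 1" and "cm V E < t"
    and below: "\<And>s (U :: 'a set) E'. 0 < s \<Longrightarrow> s < t \<Longrightarrow> graph U E' \<Longrightarrow> card U = 4 * s - 1 \<Longrightarrow>
      alpha U E' = 2 \<Longrightarrow> s \<le> cm U E'"
    and dom: "dominating_matching V E M"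
  shows "M = {}"
proof (rule ccontr)
  assume "M \<noteq> {}"
  have M: "connected_matching V E M" using dom by (simp add: dominating_matching_def)
  have "0 < card M" "card M < t"
    using \<open>M \<noteq> {}\<close> finite_connected_matching[OF G M] card_le_cm[OF G M] \<open>cm V E < t\<close>
    by auto
  have "card M + (t - card M) \<le> cm V E"
  proof (rule card_dominating_matching_add_le_cm[OF G \<open>alpha V E \<le> 2\<close> dom])
    show "0 < t - card M" "4 * (t - card M) - 1 + 2 * card M \<le> card V"
      using \<open>card V = 4 * t - 1\<close> \<open>0 < card M\<close> \<open>card M < t\<close> by auto
    show "t - card M \<le> cm U E'"
      if "graph U E'" "card U = 4 * (t - card M) - 1" "alpha U E' = 2" for U :: "'a set" and E'
      using below[OF _ _ that] \<open>0 < card M\<close> \<open>card M < t\<close> by simp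
  qed
  then show False using \<open>cm V E < t\<close> \<open>card M < t\<close> by linarith
qed

theorem lemma2p7:
  fixes V :: "'a set" and E :: "'a \<Rightarrow> 'a \<Rightarrow> bool" and t :: nat
  assumes "t > 0"
    and "graph V E"
    and "card V = 4 * t - 1"
    and "alpha V E = 2"
    and "cm V E \<le> t - 1"
    and "\<forall>t'::nat. 0 < t' \<and> t' < t \<longrightarrow>
           (\<forall>(V'::'a set) E'. graph V' E' \<and> card V' = 4 * t' - 1 \<and> alpha V' E' = 2
              \<longrightarrow> cm V' E' \<ge> t')"
  shows "\<not> (\<exists>M. M \<noteq> {} \<and> dominating_matching V E M)"
proof -
  have "alpha V E \<le> 2" "cm V E < t" using assms(1,4,5) by linarith+
  moreover have "s \<le> cm U E'"
    if "0 < s" "s < t" "graph U E'" "card U = 4 * s - 1" "alpha U E' = 2" for s and U :: "'a set" and E'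
    using assms(6) that by blast
  ultimately show ?thesis
    using minimal_counterexample_dominating_matching_empty[OF assms(2) _ assms(3)] by blast
qed

end
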